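(* Let $E\subset\Delta_n$ be finite and suppose the market weight sequence $\{\mu(t)\}_{t\ge0}$ takes values in $E$. Let $\Theta=(\overline{\Delta}_n)^E$ be the set of all portfolio maps $\pi:E\to\overline{\Delta}_n$ with the topology of uniform (equivalently pointwise) convergence, and let $\nu_0$ be a Borel probability measure on $\Theta$ with full support. Then: (i) $\lim_{t\to\infty}\frac1t\log\frac{\widehat V(t)}{V^*(t)}=0$, i.e. Cover's portfolio $\widehat\pi$ satisfies the universality property. (ii) If $\mathbb P_t$ converges weakly to a probability measure $\mathbb P$ on $E\times E$, then $\{\nu_t\}_{t\ge0}$ satisfies the large deviation principle on $\Theta$ with the convex rate function $I(\pi)=W^*-W(\pi)$, where $W(\pi)=\lim_{t\to\infty}\frac1t\log V_\pi(t)$ and $W^*=\max_{\pi\in\Theta}W(\pi)$.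
   Context: $\Delta_n$ is the open unit simplex in $\mathbb R^n$ ($n\ge2$), $\overline{\Delta}_n$ the closed one. Relative value: $V_\pi(0)=1$, $V_\pi(t+1)=V_\pi(t)\sum_i\pi_i(\mu(t))\mu_i(t+1)/\mu_i(t)$. $\widehat V(t)=\int_\Theta V_\pi(t)\,d\nu_0(\pi)$, which is the relative value of Cover's portfolio $\widehat\pi(t)=\int_\Theta\pi(\mu(t))\,d\nu_t(\pi)$; $V^*(t)=\sup_{\pi\in\Theta}V_\pi(t)$; wealth distribution $\nu_t(B)=\frac1{\widehat V(t)}\int_BV_\pi(t)\,d\nu_0(\pi)$. $\mathbb P_t=\frac1t\sum_{s=0}^{t-1}\delta_{(\mu(s),\mu(s+1))}$. Full support: the smallest closed set of full $\nu_0$-measure is $\Theta$. LDP with rate $I$: for closed $F$, $\limsup_t\frac1t\log\nu_t(F)\le-\inf_FI$; for open $G$, $\liminf_t\frac1t\log\nu_t(G)\ge-\inf_GI$. *)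

theory Defs
  imports "HOL-Probability.Probability"
begin

definition open_simplex :: "(real^'n) set" where
  "open_simplex = {x. (\<forall>i. 0 < x $ i) \<and> (\<Sum>i\<in>UNIV. x $ i) = 1}"

definition closed_simplex :: "(real^'n) set" where
  "closed_simplex = {x. (\<forall>i. 0 \<le> x $ i) \<and> (\<Sum>i\<in>UNIV. x $ i) = 1}"

text \<open>The finite state set E is indexed by a finite type 'e via an injective map
  w : 'e => open simplex; a portfolio map pi : E -> closed simplex is an element
  of real^'n^'e (pi $ e is the portfolio used when the market weight is w e).
  The topology of real^'n^'e is the topology of uniform (= pointwise) convergence.\<close>
definition Theta :: "(real^'n^'e::finite) set" where
  "Theta = {p. \<forall>e. p $ e \<in> closed_simplex}"

fun relval :: "('e::finite \<Rightarrow> real^'n) \<Rightarrow> (nat \<Rightarrow> 'e) \<Rightarrow> real^'n^'e \<Rightarrow> nat \<Rightarrow> real" where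
  "relval w mu p 0 = 1"
| "relval w mu p (Suc t) = relval w mu p t *
     (\<Sum>i\<in>UNIV. (p $ mu t) $ i * (w (mu (Suc t)) $ i / w (mu t) $ i))"

text \<open>Relative value of Cover's portfolio: integral of V_pi(t) against nu_0.\<close>
definition Vhat :: "('e::finite \<Rightarrow> real^'n) \<Rightarrow> (nat \<Rightarrow> 'e) \<Rightarrow> (real^'n^'e) measure \<Rightarrow> nat \<Rightarrow> real" where
  "Vhat w mu nu0 t = (\<integral>p. relval w mu p t \<partial>nu0)"

definition Vstar :: "('e::finite \<Rightarrow> real^'n) \<Rightarrow> (nat \<Rightarrow> 'e) \<Rightarrow> nat \<Rightarrow> real" where
  "Vstar w mu t = (SUP p\<in>Theta. relval w mu p t)"

definition wealth_dist :: "('e::finite \<Rightarrow> real^'n) \<Rightarrow> (nat \<Rightarrow> 'e) \<Rightarrow> (real^'n^'e) measure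
    \<Rightarrow> nat \<Rightarrow> (real^'n^'e) measure" where
  "wealth_dist w mu nu0 t = density nu0 (\<lambda>p. ennreal (relval w mu p t / Vhat w mu nu0 t))"

definition full_support :: "'a::topological_space measure \<Rightarrow> 'a set \<Rightarrow> bool" where
  "full_support M S \<longleftrightarrow> closed S \<and> S \<in> sets M \<and> emeasure M S = emeasure M (space M) \<and>
     (\<forall>F. closed F \<and> F \<in> sets M \<and> emeasure M F = emeasure M (space M) \<longrightarrow> S \<subseteq> F)"

text \<open>Empirical pair measure P_t and weak convergence on the finite (discrete) space E x E:
  convergence of the integrals of every (necessarily bounded continuous) function.\<close>
definition emp_integral :: "(nat \<Rightarrow> 'e) \<Rightarrow> nat \<Rightarrow> ('e \<times> 'e \<Rightarrow> real) \<Rightarrow> real" where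
  "emp_integral mu t f = (1 / real t) * (\<Sum>s<t. f (mu s, mu (Suc s)))"

definition emp_weak_conv :: "(nat \<Rightarrow> 'e::finite) \<Rightarrow> ('e \<times> 'e) pmf \<Rightarrow> bool" where
  "emp_weak_conv mu P \<longleftrightarrow>
     (\<forall>f. (\<lambda>t. emp_integral mu t f) \<longlonglongrightarrow> measure_pmf.expectation P f)"

definition ln_ereal :: "real \<Rightarrow> ereal" where
  "ln_ereal x = (if x \<le> 0 then -\<infinity> else ereal (ln x))"

definition rate_function :: "'a::topological_space set \<Rightarrow> ('a \<Rightarrow> real) \<Rightarrow> bool" where
  "rate_function S I \<longleftrightarrow> (\<forall>x\<in>S. 0 \<le> I x) \<and> (\<forall>c. closed {x\<in>S. I x \<le> c})"

text \<open>Large deviation principle on the closed set S (measures concentrated on S;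
  closed/open subsets of S are traces F \<inter> S of closed/open sets F of the ambient space).\<close>
definition LDP :: "(nat \<Rightarrow> 'a::topological_space measure) \<Rightarrow> 'a set \<Rightarrow> ('a \<Rightarrow> real) \<Rightarrow> bool" where
  "LDP nu S I \<longleftrightarrow>
     (\<forall>F. closed F \<longrightarrow>
        limsup (\<lambda>t. ereal (1 / real t) * ln_ereal (measure (nu t) (F \<inter> S)))
          \<le> - (INF x\<in>F \<inter> S. ereal (I x))) \<and>
     (\<forall>G. open G \<longrightarrow>
        - (INF x\<in>G \<inter> S. ereal (I x))
          \<le> liminf (\<lambda>t. ereal (1 / real t) * ln_ereal (measure (nu t) (G \<inter> S))))"

end

theory Submission
  imports Defs
begin

text \<open>
  In every period a portfolio map \<open>\<pi>\<close> multiplies its relative value by a growth factor, a convex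
  combination of price relatives, which therefore lies between the smallest and the largest price
  relative. Hence a map within distance proportional to \<open>1 - c\<close> of \<open>\<pi>\<close> keeps at least
  \<open>c\<^sup>t V\<^sub>\<pi>(t)\<close>. Full support of \<open>\<nu>\<^sub>0\<close> and compactness of \<open>\<Theta>\<close> bound the \<open>\<nu>\<^sub>0\<close>-mass of
  such balls from below uniformly, so \<open>m c\<^sup>t V\<^sup>*(t) \<le> Vhat(t) \<le> V\<^sup>*(t)\<close> for every
  \<open>c < 1\<close>: universality.

  If the empirical pair measures converge to \<open>P\<close>, then \<open>(1/t) ln V\<^sub>\<pi>(t)\<close> is the empirical
  average of the logarithm of the growth factor, which is bounded on \<open>\<Theta>\<close>; so it converges
  uniformly on \<open>\<Theta>\<close> to the \<open>P\<close>-expectation \<open>W(\<pi>)\<close> of that logarithm, a concave continuous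
  function. In \<open>\<nu>\<^sub>t(A) = (\<integral>\<^sub>A V\<^sub>\<pi>(t) d\<nu>\<^sub>0) / Vhat(t)\<close> the numerator is at most
  \<open>exp (t (sup\<^sub>A W + o(1)))\<close> and, for open \<open>A\<close> and \<open>\<pi> \<in> A\<close>, at least \<open>exp (t (W(\<pi>) - o(1)))\<close>
  by the ball estimate, while \<open>Vhat(t) = exp (t (W\<^sup>* + o(1)))\<close>. This is the large deviation
  principle with rate \<open>W\<^sup>* - W\<close>.
\<close>

section \<open>Portfolio maps\<close>

definition growth_factor :: "('e::finite \<Rightarrow> real^'n) \<Rightarrow> real^'n^'e \<Rightarrow> 'e \<Rightarrow> 'e \<Rightarrow> real" where
  "growth_factor w p e e' = (\<Sum>i\<in>UNIV. (p $ e) $ i * (w e' $ i / w e $ i))"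

lemma relval_Suc: "relval w mu p (Suc t) = relval w mu p t * growth_factor w p (mu t) (mu (Suc t))"
  by (simp add: growth_factor_def)

lemma growth_factor_scaleR_add:
  "growth_factor w (u *\<^sub>R p + v *\<^sub>R q) e e' = u * growth_factor w p e e' + v * growth_factor w q e e'"
  unfolding growth_factor_def by (simp add: sum.distrib sum_distrib_left algebra_simps)

lemma continuous_relval: "continuous_on UNIV (\<lambda>p. relval w mu p t)"
proof (induction t)
  case (Suc t)
  show ?case unfolding relval_Suc growth_factor_def by (intro continuous_intros Suc)
qed simp

lemma Theta_iff: "p \<in> Theta \<longleftrightarrow> (\<forall>e i. 0 \<le> p $ e $ i) \<and> (\<forall>e. (\<Sum>i\<in>UNIV. p $ e $ i) = 1)"
  by (auto simp: Theta_def closed_simplex_def)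

lemma closed_Theta: "closed Theta"
proof -
  have "Theta = (\<Inter>e. \<Inter>i. {p. 0 \<le> p $ e $ i}) \<inter> (\<Inter>e. {p. (\<Sum>i\<in>UNIV. p $ e $ i) = 1})"
    by (auto simp: Theta_iff)
  also have "closed \<dots>"
    by (intro closed_Int closed_INT ballI closed_Collect_le closed_Collect_eq continuous_intros)
  finally show ?thesis .
qed

lemma norm_le_card_Theta:
  fixes p :: "real^'n^'e::finite"
  assumes "p \<in> Theta" shows "norm p \<le> real CARD('e)"
proof -
  have "norm (p $ e) \<le> 1" for e
  proof -
    have "norm (p $ e) \<le> (\<Sum>i\<in>UNIV. \<bar>p $ e $ i\<bar>)" by (rule norm_le_l1_cart)
    also have "\<dots> = 1" using assms by (simp add: Theta_iff)
    finally show ?thesis .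
  qed
  then have "(\<Sum>e\<in>UNIV. norm (p $ e)) \<le> (\<Sum>e\<in>(UNIV::'e set). 1)" by (intro sum_mono)
  moreover have "norm p \<le> (\<Sum>e\<in>UNIV. norm (p $ e))" by (simp add: norm_vec_def L2_set_le_sum)
  ultimately show ?thesis by simp
qed

lemma compact_Theta: "compact Theta"
  using closed_Theta norm_le_card_Theta by (auto simp: compact_eq_bounded_closed bounded_iff)

lemma convex_Theta: "convex Theta"
  unfolding convex_def
  by (auto simp: Theta_iff sum.distrib sum_distrib_left[symmetric])

lemma Theta_nonempty: "Theta \<noteq> {}"
proof -
  have "(\<chi> e i. 1 / real CARD('n)) \<in> (Theta :: (real^'n^'e::finite) set)"
    by (simp add: Theta_iff)
  then show ?thesis by blast
qed

section \<open>Exponential rates of sequences\<close>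

lemma limsup_rate_le:
  fixes x :: "nat \<Rightarrow> real"
  assumes "\<And>e. 0 < e \<Longrightarrow> eventually (\<lambda>t. x t \<le> exp (real t * (B + e))) sequentially"
  shows "limsup (\<lambda>t. ereal (1 / real t) * ln_ereal (x t)) \<le> ereal B"
proof (rule ereal_le_epsilon2)
  fix e :: real assume "0 < e"
  have "eventually (\<lambda>t. ereal (1 / real t) * ln_ereal (x t) \<le> ereal (B + e)) sequentially"
    using assms[OF \<open>0 < e\<close>] eventually_gt_at_top[of 0]
  proof eventually_elim
    case (elim t)
    show ?case
    proof (cases "x t \<le> 0")
      case False
      then have "ln (x t) \<le> real t * (B + e)"
        using elim(1) by (metis ln_exp ln_le_cancel_iff exp_gt_zero not_le)
      then have "(1 / real t) * ln (x t) \<le> B + e" using elim(2) by (simp add: field_simps)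
      then show ?thesis using False by (simp add: ln_ereal_def)
    qed (use elim in \<open>simp add: ln_ereal_def\<close>)
  qed
  then have "limsup (\<lambda>t. ereal (1 / real t) * ln_ereal (x t)) \<le> ereal (B + e)"
    by (rule Limsup_bounded)
  then show "limsup (\<lambda>t. ereal (1 / real t) * ln_ereal (x t)) \<le> ereal B + ereal e" by simp
qed

lemma liminf_rate_ge:
  fixes x :: "nat \<Rightarrow> real"
  assumes "\<And>e. 0 < e \<Longrightarrow> eventually (\<lambda>t. exp (real t * (B - e)) \<le> x t) sequentially"
  shows "ereal B \<le> liminf (\<lambda>t. ereal (1 / real t) * ln_ereal (x t))"
proof (rule ereal_le_epsilon2)
  fix e :: real assume "0 < e"
  have "eventually (\<lambda>t. ereal (B - e) \<le> ereal (1 / real t) * ln_ereal (x t)) sequentially"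
    using assms[OF \<open>0 < e\<close>] eventually_gt_at_top[of 0]
  proof eventually_elim
    case (elim t)
    have "0 < x t" using elim(1) by (meson exp_gt_zero less_le_trans)
    then have "real t * (B - e) \<le> ln (x t)"
      using elim(1) by (metis ln_exp ln_le_cancel_iff exp_gt_zero)
    then have "B - e \<le> (1 / real t) * ln (x t)" using elim(2) by (simp add: field_simps)
    then show ?case using \<open>0 < x t\<close> by (simp add: ln_ereal_def)
  qed
  then have "ereal (B - e) \<le> liminf (\<lambda>t. ereal (1 / real t) * ln_ereal (x t))"
    by (rule Liminf_bounded)
  then show "ereal B \<le> liminf (\<lambda>t. ereal (1 / real t) * ln_ereal (x t)) + ereal e"
    by (metis add_right_mono diff_add_cancel plus_ereal.simps(1))
qed

lemma limsup_rate_zero: "limsup (\<lambda>t. ereal (1 / real t) * ln_ereal 0) = - \<infinity>"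
proof -
  have "eventually (\<lambda>t. ereal (1 / real t) * ln_ereal 0 \<le> - \<infinity>) sequentially"
    using eventually_gt_at_top[of 0] by eventually_elim (simp add: ln_ereal_def)
  then show ?thesis using Limsup_bounded by (metis ereal_infty_less_eq(2))
qed

lemma eventually_ln_over_n_gt:
  assumes "0 < e" shows "eventually (\<lambda>t. - e < ln m / real t) sequentially"
  using lim_const_over_n[of "ln m"] assms by (intro order_tendstoD(1)) auto

lemma tendsto_rate_zero_of_geometric_lower:
  fixes r :: "nat \<Rightarrow> real"
  assumes le_1: "\<And>t. r t \<le> 1"
    and geometric: "\<And>c. 0 < c \<Longrightarrow> c < 1 \<Longrightarrow> \<exists>m>0. \<forall>t. m * c ^ t \<le> r t"
  shows "(\<lambda>t. (1 / real t) * ln (r t)) \<longlonglongrightarrow> 0"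
proof (rule order_tendstoI)
  fix y :: real assume "y < 0"
  obtain m where m: "0 < m" "\<And>t. m * exp (y / 2) ^ t \<le> r t"
    using geometric[of "exp (y / 2)"] \<open>y < 0\<close> by auto
  have "0 < - y / 2" using \<open>y < 0\<close> by simp
  from eventually_ln_over_n_gt[OF this, of m] eventually_gt_at_top[of 0]
  show "eventually (\<lambda>t. y < (1 / real t) * ln (r t)) sequentially"
  proof eventually_elim
    case (elim t)
    have "ln m + real t * (y / 2) = ln (m * exp (y / 2) ^ t)"
      using m(1) by (simp add: ln_mult ln_realpow)
    also have "\<dots> \<le> ln (r t)" using m by (intro ln_mono) auto
    finally show ?case using elim by (simp add: field_simps)
  qed
next
  fix y :: real assume "0 < y"
  obtain m where "0 < m" "\<And>t. m * (1 / 2) ^ t \<le> r t" using geometric[of "1 / 2"] by auto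
  then have "0 < r t" for t by (meson less_le_trans mult_pos_pos zero_less_divide_1_iff zero_less_numeral zero_less_power)
  then have "(1 / real t) * ln (r t) \<le> 0" for t
    using le_1[of t] by (simp add: divide_nonpos_nonneg)
  then show "eventually (\<lambda>t. (1 / real t) * ln (r t) < y) sequentially"
    using \<open>0 < y\<close> by (intro always_eventually) (meson le_less_trans)
qed

lemma eventually_exp_le_of_geometric_lower:
  fixes x y eps :: "nat \<Rightarrow> real"
  assumes geometric: "\<And>c. 0 < c \<Longrightarrow> c < 1 \<Longrightarrow> \<exists>m>0. \<forall>t. m * c ^ t * x t \<le> y t"
    and x_ge: "\<And>t. exp (real t * (B - eps t)) \<le> x t"
    and "eps \<longlonglongrightarrow> 0" and "0 < e"
  shows "eventually (\<lambda>t. exp (real t * (B - e)) \<le> y t) sequentially"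
proof -
  obtain m where m: "0 < m" "\<And>t. m * exp (- e / 3) ^ t * x t \<le> y t"
    using geometric[of "exp (- e / 3)"] \<open>0 < e\<close> by auto
  have eps_small: "eventually (\<lambda>t. eps t < e / 3) sequentially"
    using \<open>eps \<longlonglongrightarrow> 0\<close> \<open>0 < e\<close> by (intro order_tendstoD(2)) auto
  have "0 < e / 3" using \<open>0 < e\<close> by simp
  from eps_small eventually_ln_over_n_gt[OF this, of m] eventually_gt_at_top[of 0]
  show ?thesis
  proof eventually_elim
    case (elim t)
    have "real t * eps t \<le> real t * (e / 3)" using elim by (intro mult_left_mono) auto
    moreover have "- (real t * (e / 3)) < ln m" using elim by (simp add: field_simps)
    ultimately have "exp (real t * (B - e)) \<le> exp (ln m + real t * (- e / 3) + real t * (B - eps t))"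
      by (simp add: algebra_simps)
    also have "\<dots> = m * exp (- e / 3) ^ t * exp (real t * (B - eps t))"
      by (simp only: exp_add exp_of_nat_mult exp_ln[OF m(1)])
    also have "\<dots> \<le> m * exp (- e / 3) ^ t * x t"
      using m(1) x_ge by (intro mult_left_mono) auto
    also have "\<dots> \<le> y t" by (rule m(2))
    finally show ?case .
  qed
qed

lemma convex_on_cong: "(\<And>x. x \<in> S \<Longrightarrow> f x = g x) \<Longrightarrow> convex_on S f \<longleftrightarrow> convex_on S g"
  by (auto simp: convex_on_def convex_def)

lemma rate_function_cong: "(\<And>x. x \<in> S \<Longrightarrow> I x = J x) \<Longrightarrow> rate_function S I \<longleftrightarrow> rate_function S J"
proof -
  assume "\<And>x. x \<in> S \<Longrightarrow> I x = J x"
  then have "{x \<in> S. I x \<le> c} = {x \<in> S. J x \<le> c}" for c by auto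
  with \<open>\<And>x. x \<in> S \<Longrightarrow> I x = J x\<close> show ?thesis by (simp add: rate_function_def)
qed

lemma LDP_cong: "(\<And>x. x \<in> S \<Longrightarrow> I x = J x) \<Longrightarrow> LDP nu S I \<longleftrightarrow> LDP nu S J"
  unfolding LDP_def by (metis (no_types, lifting) IntD2 INF_cong)

section \<open>Universality of Cover's portfolio\<close>

locale market =
  fixes w :: "'e::finite \<Rightarrow> real^'n" and mu :: "nat \<Rightarrow> 'e" and nu0 :: "(real^'n^'e) measure"
  assumes w_simplex: "\<And>e. w e \<in> open_simplex"
    and sets_nu0: "sets nu0 = sets borel"
    and prob_space_nu0: "prob_space nu0"
    and full_support_nu0: "full_support nu0 Theta"
begin

sublocale nu0: prob_space nu0 by (rule prob_space_nu0)

lemma w_pos: "0 < w e $ i"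
  using w_simplex[of e] by (auto simp: open_simplex_def)

definition ratio_min :: real where
  "ratio_min = Min (range (\<lambda>(e, e', i). w e' $ i / w e $ i))"

definition ratio_max :: real where
  "ratio_max = Max (range (\<lambda>(e, e', i). w e' $ i / w e $ i))"

lemma ratio_min_le: "ratio_min \<le> w e' $ i / w e $ i"
  unfolding ratio_min_def by (rule Min_le) (auto intro: image_eqI[where x = "(e, e', i)"])

lemma le_ratio_max: "w e' $ i / w e $ i \<le> ratio_max"
  unfolding ratio_max_def by (rule Max_ge) (auto intro: image_eqI[where x = "(e, e', i)"])

lemma ratio_min_pos: "0 < ratio_min"
  unfolding ratio_min_def by (subst Min_gr_iff) (auto simp: w_pos)

lemma ratio_max_pos: "0 < ratio_max"
  using ratio_min_pos ratio_min_le le_ratio_max by (meson less_le_trans)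

lemma growth_factor_bounds:
  assumes "p \<in> Theta"
  shows "ratio_min \<le> growth_factor w p e e'" "growth_factor w p e e' \<le> ratio_max"
proof -
  have p: "\<And>i. 0 \<le> p $ e $ i" "(\<Sum>i\<in>UNIV. p $ e $ i) = 1" using assms by (auto simp: Theta_iff)
  have "ratio_min = (\<Sum>i\<in>UNIV. p $ e $ i * ratio_min)" using p(2) by (simp flip: sum_distrib_right)
  also have "\<dots> \<le> growth_factor w p e e'"
    unfolding growth_factor_def by (intro sum_mono mult_left_mono ratio_min_le p(1))
  finally show "ratio_min \<le> growth_factor w p e e'" .
  have "growth_factor w p e e' \<le> (\<Sum>i\<in>UNIV. p $ e $ i * ratio_max)"
    unfolding growth_factor_def by (intro sum_mono mult_left_mono le_ratio_max p(1))
  also have "\<dots> = ratio_max" using p(2) by (simp flip: sum_distrib_right)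
  finally show "growth_factor w p e e' \<le> ratio_max" .
qed

lemma growth_factor_pos: "p \<in> Theta \<Longrightarrow> 0 < growth_factor w p e e'"
  using growth_factor_bounds(1) ratio_min_pos by (meson less_le_trans)

lemma relval_pos: "p \<in> Theta \<Longrightarrow> 0 < relval w mu p t"
  by (induction t) (simp_all add: relval_Suc growth_factor_pos del: relval.simps(2))

lemma relval_le_power: "p \<in> Theta \<Longrightarrow> relval w mu p t \<le> ratio_max ^ t"
proof (induction t)
  case (Suc t)
  then show ?case
    unfolding relval_Suc power_Suc2
    by (intro mult_mono growth_factor_bounds(2)) (auto simp: relval_pos less_imp_le growth_factor_pos ratio_max_pos)
qed simp

text \<open>Moving a portfolio map by at most \<open>r\<close> in each coordinate changes a growth factor by at most
  \<open>CARD('n) * r * ratio_max\<close>; for \<open>r = perturb_radius c\<close> this is at most \<open>1 - c\<close> times the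
  growth factor itself, which is at least \<open>ratio_min\<close>.\<close>
definition perturb_radius :: "real \<Rightarrow> real" where
  "perturb_radius c = (1 - c) * ratio_min / (real CARD('n) * ratio_max)"

lemma perturb_radius_pos: "c < 1 \<Longrightarrow> 0 < perturb_radius c"
  using ratio_min_pos ratio_max_pos by (simp add: perturb_radius_def)

lemma growth_factor_ge_perturb:
  assumes p: "p \<in> Theta" and "c \<le> 1" and dist: "dist q p \<le> perturb_radius c"
  shows "c * growth_factor w p e e' \<le> growth_factor w q e e'"
proof -
  have "growth_factor w p e e' - growth_factor w q e e' = (\<Sum>i\<in>UNIV. (p $ e $ i - q $ e $ i) * (w e' $ i / w e $ i))"
    unfolding growth_factor_def by (simp add: algebra_simps flip: sum_subtractf)
  also have "\<dots> \<le> (\<Sum>i\<in>(UNIV::'n set). perturb_radius c * ratio_max)"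
  proof (intro sum_mono)
    fix i
    have "\<bar>p $ e $ i - q $ e $ i\<bar> \<le> dist q p"
      using component_le_norm_cart[of "(q - p) $ e" i] Finite_Cartesian_Product.norm_nth_le[of "q - p" e]
      by (simp add: dist_norm)
    moreover have "0 \<le> w e' $ i / w e $ i" using w_pos[of e' i] w_pos[of e i] by simp
    ultimately show "(p $ e $ i - q $ e $ i) * (w e' $ i / w e $ i) \<le> perturb_radius c * ratio_max"
      using dist le_ratio_max[of e' i e] ratio_max_pos
      by (smt (verit, best) abs_le_D1 mult_mono mult_right_mono)
  qed
  also have "\<dots> = (1 - c) * ratio_min"
    using ratio_max_pos by (simp add: perturb_radius_def)
  also have "\<dots> \<le> (1 - c) * growth_factor w p e e'"
    using \<open>c \<le> 1\<close> growth_factor_bounds(1)[OF p] by (intro mult_left_mono) auto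
  finally show ?thesis by (simp add: algebra_simps)
qed

lemma relval_ge_perturb:
  assumes "p \<in> Theta" "q \<in> Theta" "0 \<le> c" "c \<le> 1" "dist q p \<le> perturb_radius c"
  shows "c ^ t * relval w mu p t \<le> relval w mu q t"
proof (induction t)
  case (Suc t)
  have "c ^ Suc t * relval w mu p (Suc t)
      = (c ^ t * relval w mu p t) * (c * growth_factor w p (mu t) (mu (Suc t)))"
    by (simp add: relval_Suc del: relval.simps)
  also have "\<dots> \<le> relval w mu q t * growth_factor w q (mu t) (mu (Suc t))"
    using assms Suc by (intro mult_mono growth_factor_ge_perturb) (auto simp: relval_pos growth_factor_pos less_imp_le)
  finally show ?case by (simp add: relval_Suc del: relval.simps)
qed simp

lemma relval_measurable [measurable]: "(\<lambda>p. relval w mu p t) \<in> borel_measurable nu0"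
  using borel_measurable_continuous_onI[OF continuous_relval] sets_nu0 by (simp cong: measurable_cong_sets)

lemma Theta_sets [measurable]: "Theta \<in> sets nu0"
  using sets_nu0 by (simp add: borel_closed[OF closed_Theta])

lemma prob_Theta: "nu0.prob Theta = 1"
  using full_support_nu0 nu0.emeasure_space_1
  by (simp add: full_support_def nu0.emeasure_eq_measure)

lemma AE_Theta: "AE p in nu0. p \<in> Theta"
  by (rule nu0.AE_prob_1[OF prob_Theta])

lemma prob_open_Int_Theta_pos:
  assumes "open U" "U \<inter> Theta \<noteq> {}"
  shows "0 < nu0.prob (U \<inter> Theta)"
proof (rule ccontr)
  assume "\<not> 0 < nu0.prob (U \<inter> Theta)"
  then have "nu0.prob (U \<inter> Theta) = 0" by (simp add: order.strict_iff_order)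
  moreover have U: "U \<in> sets nu0" using \<open>open U\<close> sets_nu0 by simp
  ultimately have "nu0.prob (Theta - U) = 1"
    using nu0.finite_measure_Diff'[of Theta U] prob_Theta by (simp add: Int_commute)
  then have "emeasure nu0 (Theta - U) = emeasure nu0 (space nu0)"
    by (simp add: nu0.emeasure_eq_measure prob_space.prob_space[OF prob_space_nu0])
  moreover have "closed (Theta - U)" using closed_Theta \<open>open U\<close> by (rule closed_Diff)
  ultimately have "Theta \<subseteq> Theta - U"
    using full_support_nu0 U unfolding full_support_def by blast
  then show False using \<open>U \<inter> Theta \<noteq> {}\<close> by blast
qed

lemma uniform_ball_mass:
  assumes "0 < r"
  shows "\<exists>m>0. \<forall>p\<in>Theta. m \<le> nu0.prob (ball p r \<inter> Theta)"
proof -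
  have "Theta \<subseteq> (\<Union>c\<in>Theta. ball c (r / 2))" using \<open>0 < r\<close> by force
  then obtain C :: "(real^'n^'e) set" where C: "C \<subseteq> Theta" "finite C" "Theta \<subseteq> (\<Union>c\<in>C. ball c (r / 2))"
    by (rule compactE_image[OF compact_Theta open_ball])
  define m where "m = Min (insert 1 ((\<lambda>c. nu0.prob (ball c (r / 2) \<inter> Theta)) ` C))"
  have "0 < nu0.prob (ball c (r / 2) \<inter> Theta)" if "c \<in> C" for c
  proof (rule prob_open_Int_Theta_pos)
    have "c \<in> ball c (r / 2) \<inter> Theta" using that C(1) \<open>0 < r\<close> by auto
    then show "ball c (r / 2) \<inter> Theta \<noteq> {}" by blast
  qed simp
  then have "0 < m" unfolding m_def using C(2) by (subst Min_gr_iff) auto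
  moreover have "m \<le> nu0.prob (ball p r \<inter> Theta)" if "p \<in> Theta" for p
  proof -
    obtain c where c: "c \<in> C" "p \<in> ball c (r / 2)" using C(3) \<open>p \<in> Theta\<close> by auto
    have "m \<le> nu0.prob (ball c (r / 2) \<inter> Theta)" unfolding m_def using C(2) c(1) by simp
    also have "\<dots> \<le> nu0.prob (ball p r \<inter> Theta)"
    proof (rule nu0.finite_measure_mono)
      show "ball c (r / 2) \<inter> Theta \<subseteq> ball p r \<inter> Theta"
        using c(2) dist_triangle_half_l[of _ c r p] by (auto simp: dist_commute)
      show "ball p r \<inter> Theta \<in> sets nu0" by (intro sets.Int Theta_sets) (simp add: sets_nu0)
    qed
    finally show ?thesis .
  qed
  ultimately show ?thesis by blast
qed

definition wealth_on :: "(real^'n^'e) set \<Rightarrow> nat \<Rightarrow> real" where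
  "wealth_on A t = (\<integral>p. indicator A p * relval w mu p t \<partial>nu0)"

lemma Vhat_eq_wealth_on: "Vhat w mu nu0 t = wealth_on UNIV t"
  by (simp add: Vhat_def wealth_on_def)

lemma integrable_relval_on:
  assumes "A \<in> sets nu0" shows "integrable nu0 (\<lambda>p. indicator A p * relval w mu p t)"
proof (rule nu0.integrable_const_bound[where B = "ratio_max ^ t"])
  show "AE p in nu0. norm (indicator A p * relval w mu p t) \<le> ratio_max ^ t"
    using AE_Theta
    by eventually_elim
      (auto simp: indicator_def relval_le_power abs_of_pos relval_pos ratio_max_pos less_imp_le)
qed (use assms in simp)

lemma wealth_on_ge:
  assumes "A \<in> sets nu0" "B \<in> sets nu0" "B \<inter> Theta \<subseteq> A" "0 \<le> L"
    and "\<And>p. p \<in> B \<inter> Theta \<Longrightarrow> L \<le> relval w mu p t"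
  shows "nu0.prob (B \<inter> Theta) * L \<le> wealth_on A t"
proof -
  have "nu0.prob (B \<inter> Theta) * L = (\<integral>p. indicator (B \<inter> Theta) p * L \<partial>nu0)"
    using assms(2) by simp
  also have "\<dots> \<le> wealth_on A t"
    unfolding wealth_on_def
  proof (rule integral_mono_AE)
    show "integrable nu0 (\<lambda>p. indicator (B \<inter> Theta) p * L)"
      using assms(2) by (intro integrable_mult_left integrable_real_indicator) (auto simp: nu0.emeasure_eq_measure)
    show "AE p in nu0. indicator (B \<inter> Theta) p * L \<le> indicator A p * relval w mu p t"
      using AE_Theta
      by eventually_elim
        (use assms(3,5) in \<open>auto simp: indicator_def relval_pos less_imp_le\<close>)
  qed (rule integrable_relval_on[OF assms(1)])
  finally show ?thesis .
qed

lemma wealth_on_le: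
  assumes "A \<in> sets nu0" "0 \<le> U" "\<And>p. p \<in> A \<inter> Theta \<Longrightarrow> relval w mu p t \<le> U"
  shows "wealth_on A t \<le> U"
proof -
  have "wealth_on A t \<le> (\<integral>p. U \<partial>nu0)"
    unfolding wealth_on_def
    by (rule integral_mono_AE[OF integrable_relval_on[OF assms(1)]])
      (use AE_Theta in \<open>auto elim!: eventually_mono simp: indicator_def assms(2,3)\<close>)
  then show ?thesis by (simp add: nu0.prob_space)
qed

lemma wealth_on_ball_ge:
  assumes "A \<in> sets nu0" "q \<in> Theta" "0 \<le> c" "c \<le> 1" "r \<le> perturb_radius c"
    "ball q r \<inter> Theta \<subseteq> A"
  shows "nu0.prob (ball q r \<inter> Theta) * (c ^ t * relval w mu q t) \<le> wealth_on A t"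
proof (rule wealth_on_ge)
  fix p assume "p \<in> ball q r \<inter> Theta"
  with assms show "c ^ t * relval w mu q t \<le> relval w mu p t"
    by (intro relval_ge_perturb) (auto simp: dist_commute)
qed (use assms relval_pos[OF assms(2), of t] in \<open>auto simp: sets_nu0\<close>)

lemma Vhat_ge_geometric:
  assumes "0 < c" "c < 1"
  shows "\<exists>m>0. \<forall>t. \<forall>p\<in>Theta. m * c ^ t * relval w mu p t \<le> Vhat w mu nu0 t"
proof -
  obtain m where m: "0 < m" "\<And>p. p \<in> Theta \<Longrightarrow> m \<le> nu0.prob (ball p (perturb_radius c) \<inter> Theta)"
    using uniform_ball_mass[OF perturb_radius_pos[OF \<open>c < 1\<close>]] by blast
  have "m * c ^ t * relval w mu p t \<le> Vhat w mu nu0 t" if "p \<in> Theta" for t p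
  proof -
    have "m * c ^ t * relval w mu p t
        \<le> nu0.prob (ball p (perturb_radius c) \<inter> Theta) * (c ^ t * relval w mu p t)"
      using m(2)[OF that] assms relval_pos[OF that, of t] by (simp add: mult.assoc mult_right_mono)
    also have "\<dots> \<le> Vhat w mu nu0 t"
      unfolding Vhat_eq_wealth_on using that assms by (intro wealth_on_ball_ge) (auto simp: sets_nu0)
    finally show ?thesis .
  qed
  then show ?thesis using m(1) by blast
qed

lemma Vhat_pos: "0 < Vhat w mu nu0 t"
proof -
  obtain m where m: "0 < m" "\<And>p. p \<in> Theta \<Longrightarrow> m * (1 / 2) ^ t * relval w mu p t \<le> Vhat w mu nu0 t"
    using Vhat_ge_geometric[of "1 / 2"] by auto
  obtain p where p: "p \<in> (Theta :: (real^'n^'e) set)" using Theta_nonempty by blast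
  have "0 < m * (1 / 2) ^ t * relval w mu p t" using m(1) relval_pos[OF p] by simp
  then show ?thesis using m(2)[OF p] by linarith
qed

lemma wealth_dist_eq:
  assumes "A \<in> sets nu0"
  shows "measure (wealth_dist w mu nu0 t) A = wealth_on A t / Vhat w mu nu0 t"
proof -
  let ?f = "\<lambda>p. indicator A p * relval w mu p t / Vhat w mu nu0 t"
  have nonneg: "AE p in nu0. 0 \<le> ?f p"
    using AE_Theta by eventually_elim (auto simp: indicator_def relval_pos less_imp_le Vhat_pos)
  have "emeasure (wealth_dist w mu nu0 t) A = (\<integral>\<^sup>+p. ennreal (relval w mu p t / Vhat w mu nu0 t) * indicator A p \<partial>nu0)"
    unfolding wealth_dist_def by (rule emeasure_density) (use assms in auto)
  also have "\<dots> = (\<integral>\<^sup>+p. ennreal (?f p) \<partial>nu0)"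
    by (intro nn_integral_cong) (auto split: split_indicator)
  also have "\<dots> = ennreal (\<integral>p. ?f p \<partial>nu0)"
    using integrable_relval_on[OF assms] nonneg by (intro nn_integral_eq_integral) auto
  finally show ?thesis
    using integral_nonneg_AE[OF nonneg] by (simp add: measure_def wealth_on_def)
qed

lemma wealth_on_open_ge_geometric:
  assumes "open G" "q \<in> G \<inter> Theta" "0 < c" "c < 1"
  shows "\<exists>m>0. \<forall>t. m * c ^ t * relval w mu q t \<le> wealth_on (G \<inter> Theta) t"
proof -
  obtain rho where "0 < rho" "ball q rho \<subseteq> G" using assms(1,2) open_contains_ball by blast
  define r where "r = min rho (perturb_radius c)"
  have "0 < r" using \<open>0 < rho\<close> perturb_radius_pos[OF \<open>c < 1\<close>] by (simp add: r_def)
  define m where "m = nu0.prob (ball q r \<inter> Theta)"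
  have "q \<in> ball q r \<inter> Theta" using assms(2) \<open>0 < r\<close> by simp
  then have "0 < m" unfolding m_def by (metis prob_open_Int_Theta_pos open_ball empty_iff)
  moreover have "m * c ^ t * relval w mu q t \<le> wealth_on (G \<inter> Theta) t" for t
    unfolding m_def mult.assoc using assms \<open>ball q rho \<subseteq> G\<close>
    by (intro wealth_on_ball_ge) (auto simp: r_def sets_nu0 borel_open borel_closed[OF closed_Theta])
  ultimately show ?thesis by blast
qed

lemma relval_le_Vstar: "p \<in> Theta \<Longrightarrow> relval w mu p t \<le> Vstar w mu t"
  unfolding Vstar_def by (rule cSUP_upper) (auto intro: bdd_aboveI2 relval_le_power)

lemma Vstar_le: "(\<And>p. p \<in> Theta \<Longrightarrow> relval w mu p t \<le> U) \<Longrightarrow> Vstar w mu t \<le> U"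
  unfolding Vstar_def by (rule cSUP_least[OF Theta_nonempty])

lemma Vstar_pos: "0 < Vstar w mu t"
proof -
  obtain p where "p \<in> (Theta :: (real^'n^'e) set)" using Theta_nonempty by blast
  then show ?thesis using relval_pos relval_le_Vstar by (meson less_le_trans)
qed

lemma Vhat_le_Vstar: "Vhat w mu nu0 t \<le> Vstar w mu t"
  unfolding Vhat_eq_wealth_on
  by (rule wealth_on_le) (simp_all add: sets_nu0 relval_le_Vstar Vstar_pos less_imp_le)

theorem universality: "(\<lambda>t. (1 / real t) * ln (Vhat w mu nu0 t / Vstar w mu t)) \<longlonglongrightarrow> 0"
proof (rule tendsto_rate_zero_of_geometric_lower)
  show "Vhat w mu nu0 t / Vstar w mu t \<le> 1" for t
    using Vhat_le_Vstar[of t] Vstar_pos[of t] by simp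
  fix c :: real assume "0 < c" "c < 1"
  then obtain m where m: "0 < m" "\<And>t p. p \<in> Theta \<Longrightarrow> m * c ^ t * relval w mu p t \<le> Vhat w mu nu0 t"
    using Vhat_ge_geometric[OF \<open>0 < c\<close> \<open>c < 1\<close>] by blast
  have "m * c ^ t \<le> Vhat w mu nu0 t / Vstar w mu t" for t
  proof -
    have mc: "0 < m * c ^ t" using m(1) \<open>0 < c\<close> by simp
    have "Vstar w mu t \<le> Vhat w mu nu0 t / (m * c ^ t)"
      using m(2) mc by (intro Vstar_le) (simp add: pos_le_divide_eq mult.commute)
    then show ?thesis using mc Vstar_pos[of t] by (simp add: pos_le_divide_eq mult.commute)
  qed
  with m(1) show "\<exists>m>0. \<forall>t. m * c ^ t \<le> Vhat w mu nu0 t / Vstar w mu t" by blast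
qed

end

section \<open>Large deviations of the wealth distribution\<close>

locale market_limit = market w mu nu0 for w :: "'e::finite \<Rightarrow> real^'n" and mu nu0 +
  fixes P :: "('e \<times> 'e) pmf"
  assumes emp_weak_conv: "emp_weak_conv mu P"
begin

definition log_growth :: "real^'n^'e \<Rightarrow> 'e \<times> 'e \<Rightarrow> real" where
  "log_growth p x = ln (growth_factor w p (fst x) (snd x))"

definition growth_rate :: "real^'n^'e \<Rightarrow> real" where
  "growth_rate p = measure_pmf.expectation P (log_growth p)"

definition max_growth_rate :: real where
  "max_growth_rate = (SUP p\<in>Theta. growth_rate p)"

lemma expectation_eq_sum: "measure_pmf.expectation P f = (\<Sum>x\<in>UNIV. f x * pmf P x)"
  by (subst integral_measure_pmf[of UNIV]) (auto simp: mult_ac)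

lemma relval_eq_exp:
  assumes "p \<in> Theta"
  shows "relval w mu p t = exp (real t * emp_integral mu t (log_growth p))"
proof -
  have "relval w mu p t = exp (\<Sum>s<t. log_growth p (mu s, mu (Suc s)))"
    by (induction t)
      (simp_all add: relval_Suc exp_add log_growth_def growth_factor_pos[OF assms] del: relval.simps(2))
  then show ?thesis by (simp add: emp_integral_def)
qed

lemma tendsto_growth_rate:
  assumes "p \<in> Theta"
  shows "(\<lambda>t. (1 / real t) * ln (relval w mu p t)) \<longlonglongrightarrow> growth_rate p"
proof -
  have "(1 / real t) * ln (relval w mu p t) = emp_integral mu t (log_growth p)" for t
    by (cases "t = 0") (simp_all add: relval_eq_exp[OF assms] emp_integral_def)
  then show ?thesis
    using emp_weak_conv by (simp add: emp_weak_conv_def growth_rate_def)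
qed

lemma continuous_on_growth_rate: "continuous_on Theta growth_rate"
proof -
  have "continuous_on Theta (\<lambda>p. growth_factor w p e e')" for e e'
    unfolding growth_factor_def by (intro continuous_intros)
  then have "continuous_on Theta (\<lambda>p. log_growth p x)" for x
    unfolding log_growth_def by (rule continuous_on_ln) (use growth_factor_pos in \<open>metis less_irrefl\<close>)
  then show ?thesis
    unfolding growth_rate_def expectation_eq_sum by (intro continuous_intros)
qed

lemma concave_on_growth_rate: "concave_on Theta growth_rate"
  unfolding concave_on_iff
proof (intro conjI convex_Theta ballI allI impI)
  fix p q :: "real^'n^'e" and u v :: real
  assume "p \<in> Theta" "q \<in> Theta" "0 \<le> u" "0 \<le> v" "u + v = 1"
  then have "u * log_growth p x + v * log_growth q x \<le> log_growth (u *\<^sub>R p + v *\<^sub>R q) x" for x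
    using ln_concave growth_factor_pos unfolding concave_on_iff log_growth_def growth_factor_scaleR_add by auto
  then have "(\<Sum>x\<in>UNIV. (u * log_growth p x + v * log_growth q x) * pmf P x)
      \<le> (\<Sum>x\<in>UNIV. log_growth (u *\<^sub>R p + v *\<^sub>R q) x * pmf P x)"
    by (intro sum_mono mult_right_mono) simp_all
  then show "u * growth_rate p + v * growth_rate q \<le> growth_rate (u *\<^sub>R p + v *\<^sub>R q)"
    unfolding growth_rate_def expectation_eq_sum
    by (simp add: sum.distrib sum_distrib_left algebra_simps)
qed

lemma bdd_above_growth_rate: "bdd_above (growth_rate ` Theta)"
  using compact_continuous_image[OF continuous_on_growth_rate compact_Theta]
  by (simp add: bounded_imp_bdd_above compact_imp_bounded)

lemma growth_rate_le_max: "p \<in> Theta \<Longrightarrow> growth_rate p \<le> max_growth_rate"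
  unfolding max_growth_rate_def by (rule cSUP_upper[OF _ bdd_above_growth_rate])

lemma max_growth_rate_attained: "\<exists>p\<in>Theta. growth_rate p = max_growth_rate"
proof -
  obtain p where p: "p \<in> Theta" "\<And>q. q \<in> Theta \<Longrightarrow> growth_rate q \<le> growth_rate p"
    using continuous_attains_sup[OF compact_Theta Theta_nonempty continuous_on_growth_rate] by blast
  then have "max_growth_rate \<le> growth_rate p"
    unfolding max_growth_rate_def by (intro cSUP_least Theta_nonempty)
  with p(1) growth_rate_le_max show ?thesis by (metis order_antisym)
qed

definition pair_freq :: "nat \<Rightarrow> 'e \<times> 'e \<Rightarrow> real" where
  "pair_freq t x = emp_integral mu t (\<lambda>y. if y = x then 1 else 0)"

lemma emp_integral_eq_sum: "emp_integral mu t f = (\<Sum>x\<in>UNIV. f x * pair_freq t x)"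
proof -
  have "(\<Sum>s<t. f (mu s, mu (Suc s)))
      = (\<Sum>s<t. \<Sum>x\<in>UNIV. f x * (if (mu s, mu (Suc s)) = x then 1 else 0))"
    by (intro sum.cong refl) (simp add: if_distrib cong: if_cong)
  then show ?thesis
    unfolding pair_freq_def emp_integral_def
    by (simp add: sum.swap[of _ "{..<t}"] sum_distrib_left mult_ac)
qed

lemma pair_freq_tendsto: "(\<lambda>t. pair_freq t x) \<longlonglongrightarrow> pmf P x"
proof -
  have "measure_pmf.expectation P (\<lambda>y. if y = x then 1 else 0) = pmf P x"
    unfolding expectation_eq_sum by (simp add: if_distrib[of "\<lambda>c. c * _"] cong: if_cong)
  then show ?thesis
    using emp_weak_conv unfolding emp_weak_conv_def pair_freq_def by metis
qed

definition log_growth_bound :: real where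
  "log_growth_bound = \<bar>ln ratio_min\<bar> + \<bar>ln ratio_max\<bar>"

lemma abs_log_growth_le: "p \<in> Theta \<Longrightarrow> \<bar>log_growth p x\<bar> \<le> log_growth_bound"
proof -
  assume p: "p \<in> Theta"
  have "ln ratio_min \<le> log_growth p x" "log_growth p x \<le> ln ratio_max"
    unfolding log_growth_def
    using growth_factor_bounds[OF p] growth_factor_pos[OF p] ratio_min_pos ratio_max_pos
    by (simp_all add: ln_le_cancel_iff)
  then show ?thesis unfolding log_growth_bound_def by linarith
qed

definition rate_error :: "nat \<Rightarrow> real" where
  "rate_error t = log_growth_bound * (\<Sum>x\<in>UNIV. \<bar>pair_freq t x - pmf P x\<bar>)"

lemma rate_error_tendsto_zero: "rate_error \<longlonglongrightarrow> 0"
proof -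
  have "(\<lambda>t. log_growth_bound * (\<Sum>x\<in>UNIV. \<bar>pair_freq t x - pmf P x\<bar>))
      \<longlonglongrightarrow> log_growth_bound * (\<Sum>x\<in>(UNIV::('e \<times> 'e) set). \<bar>pmf P x - pmf P x\<bar>)"
    by (intro tendsto_intros pair_freq_tendsto)
  then show ?thesis by (simp add: rate_error_def[abs_def])
qed

lemma emp_integral_log_growth_approx:
  assumes "p \<in> Theta"
  shows "\<bar>emp_integral mu t (log_growth p) - growth_rate p\<bar> \<le> rate_error t"
proof -
  have "\<bar>emp_integral mu t (log_growth p) - growth_rate p\<bar>
      = \<bar>\<Sum>x\<in>UNIV. log_growth p x * (pair_freq t x - pmf P x)\<bar>"
    unfolding growth_rate_def emp_integral_eq_sum expectation_eq_sum
    by (simp add: sum_subtractf right_diff_distrib)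
  also have "\<dots> \<le> (\<Sum>x\<in>UNIV. log_growth_bound * \<bar>pair_freq t x - pmf P x\<bar>)"
    by (rule order_trans[OF sum_abs sum_mono])
      (simp add: abs_mult mult_right_mono abs_log_growth_le[OF assms])
  finally show ?thesis by (simp add: rate_error_def sum_distrib_left)
qed

lemma relval_le_exp_rate: "p \<in> Theta \<Longrightarrow> relval w mu p t \<le> exp (real t * (growth_rate p + rate_error t))"
  using emp_integral_log_growth_approx[of p t] by (simp add: relval_eq_exp mult_left_mono)

lemma relval_ge_exp_rate: "p \<in> Theta \<Longrightarrow> exp (real t * (growth_rate p - rate_error t)) \<le> relval w mu p t"
  using emp_integral_log_growth_approx[of p t] by (simp add: relval_eq_exp mult_left_mono)

lemma wealth_on_le_exp_rate:
  assumes "A \<in> sets nu0" "\<And>p. p \<in> A \<inter> Theta \<Longrightarrow> growth_rate p \<le> B"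
  shows "wealth_on A t \<le> exp (real t * (B + rate_error t))"
proof (rule wealth_on_le[OF assms(1)])
  fix p assume p: "p \<in> A \<inter> Theta"
  have "relval w mu p t \<le> exp (real t * (growth_rate p + rate_error t))"
    using p by (intro relval_le_exp_rate) auto
  also have "\<dots> \<le> exp (real t * (B + rate_error t))"
    using assms(2)[OF p] by (simp add: mult_left_mono)
  finally show "relval w mu p t \<le> exp (real t * (B + rate_error t))" .
qed simp

lemma Vhat_le_exp_rate: "Vhat w mu nu0 t \<le> exp (real t * (max_growth_rate + rate_error t))"
  unfolding Vhat_eq_wealth_on by (rule wealth_on_le_exp_rate) (simp_all add: sets_nu0 growth_rate_le_max)

lemma eventually_Vhat_ge_exp_rate:
  assumes "0 < e"
  shows "eventually (\<lambda>t. exp (real t * (max_growth_rate - e)) \<le> Vhat w mu nu0 t) sequentially"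
proof -
  obtain p where p: "p \<in> Theta" "growth_rate p = max_growth_rate"
    using max_growth_rate_attained by blast
  show ?thesis
  proof (rule eventually_exp_le_of_geometric_lower[OF _ _ rate_error_tendsto_zero assms])
    show "\<exists>m>0. \<forall>t. m * c ^ t * relval w mu p t \<le> Vhat w mu nu0 t" if "0 < c" "c < 1" for c
      using Vhat_ge_geometric[OF that] p(1) by blast
    show "exp (real t * (max_growth_rate - rate_error t)) \<le> relval w mu p t" for t
      using relval_ge_exp_rate[OF p(1)] p(2) by simp
  qed
qed

lemma eventually_wealth_on_open_ge_exp_rate:
  assumes "open G" "q \<in> G \<inter> Theta" "0 < e"
  shows "eventually (\<lambda>t. exp (real t * (growth_rate q - e)) \<le> wealth_on (G \<inter> Theta) t) sequentially"
proof (rule eventually_exp_le_of_geometric_lower[OF _ _ rate_error_tendsto_zero \<open>0 < e\<close>])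
  show "\<exists>m>0. \<forall>t. m * c ^ t * relval w mu q t \<le> wealth_on (G \<inter> Theta) t" if "0 < c" "c < 1" for c
    using wealth_on_open_ge_geometric[OF assms(1,2) that] .
  show "exp (real t * (growth_rate q - rate_error t)) \<le> relval w mu q t" for t
    using assms(2) by (intro relval_ge_exp_rate) simp
qed

lemma eventually_wealth_dist_le_exp_rate:
  assumes A: "A \<in> sets nu0" and le_B: "\<And>p. p \<in> A \<inter> Theta \<Longrightarrow> growth_rate p \<le> B" and "0 < e"
  shows "eventually (\<lambda>t. measure (wealth_dist w mu nu0 t) A
    \<le> exp (real t * (B - max_growth_rate + e))) sequentially"
proof -
  have "eventually (\<lambda>t. rate_error t < e / 2) sequentially"
    using rate_error_tendsto_zero \<open>0 < e\<close> by (intro order_tendstoD(2)) auto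
  with eventually_Vhat_ge_exp_rate[OF half_gt_zero[OF \<open>0 < e\<close>]] show ?thesis
  proof eventually_elim
    case (elim t)
    have "measure (wealth_dist w mu nu0 t) A = wealth_on A t / Vhat w mu nu0 t"
      by (rule wealth_dist_eq[OF A])
    also have "\<dots> \<le> exp (real t * (B + rate_error t)) / exp (real t * (max_growth_rate - e / 2))"
      by (rule frac_le[OF _ wealth_on_le_exp_rate[OF A le_B] _ elim(1)]) simp_all
    also have "\<dots> \<le> exp (real t * (B - max_growth_rate + e))"
    proof -
      have "real t * rate_error t \<le> real t * (e / 2)" using elim(2) by (intro mult_left_mono) auto
      then show ?thesis by (simp add: exp_diff[symmetric] algebra_simps)
    qed
    finally show ?case .
  qed
qed

lemma eventually_wealth_dist_ge_exp_rate:
  assumes "open G" "q \<in> G \<inter> Theta" "0 < e"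
  shows "eventually (\<lambda>t. exp (real t * (growth_rate q - max_growth_rate - e))
    \<le> measure (wealth_dist w mu nu0 t) (G \<inter> Theta)) sequentially"
proof -
  have G: "G \<inter> Theta \<in> sets nu0" using assms by (simp add: sets_nu0 borel_open borel_closed closed_Theta)
  have "eventually (\<lambda>t. rate_error t < e / 2) sequentially"
    using rate_error_tendsto_zero \<open>0 < e\<close> by (intro order_tendstoD(2)) auto
  with eventually_wealth_on_open_ge_exp_rate[OF assms(1,2) half_gt_zero[OF \<open>0 < e\<close>]] show ?thesis
  proof eventually_elim
    case (elim t)
    have "exp (real t * (growth_rate q - max_growth_rate - e))
        \<le> exp (real t * (growth_rate q - e / 2)) / exp (real t * (max_growth_rate + rate_error t))"
    proof -
      have "real t * rate_error t \<le> real t * (e / 2)" using elim(2) by (intro mult_left_mono) auto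
      then show ?thesis by (simp add: exp_diff[symmetric] algebra_simps)
    qed
    also have "\<dots> \<le> wealth_on (G \<inter> Theta) t / Vhat w mu nu0 t"
      by (rule frac_le[OF order_trans[OF exp_ge_zero elim(1)] elim(1) Vhat_pos Vhat_le_exp_rate])
    also have "\<dots> = measure (wealth_dist w mu nu0 t) (G \<inter> Theta)"
      by (rule wealth_dist_eq[OF G, symmetric])
    finally show ?case .
  qed
qed

lemma ldp_upper_bound:
  assumes "closed F"
  shows "limsup (\<lambda>t. ereal (1 / real t) * ln_ereal (measure (wealth_dist w mu nu0 t) (F \<inter> Theta)))
    \<le> - (INF p\<in>F \<inter> Theta. ereal (max_growth_rate - growth_rate p))"
proof (cases "F \<inter> Theta = {}")
  case True
  then show ?thesis by (simp add: limsup_rate_zero)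
next
  case False
  have "compact (F \<inter> Theta)" using assms compact_Theta by (rule closed_Int_compact)
  then obtain p0 where p0: "p0 \<in> F \<inter> Theta" "\<And>p. p \<in> F \<inter> Theta \<Longrightarrow> growth_rate p \<le> growth_rate p0"
    using continuous_attains_sup[OF _ False continuous_on_subset[OF continuous_on_growth_rate]] by blast
  have "F \<inter> Theta \<in> sets nu0" using assms by (simp add: sets_nu0 borel_closed closed_Theta)
  then have "limsup (\<lambda>t. ereal (1 / real t) * ln_ereal (measure (wealth_dist w mu nu0 t) (F \<inter> Theta)))
      \<le> ereal (growth_rate p0 - max_growth_rate)"
    using p0(2) by (intro limsup_rate_le eventually_wealth_dist_le_exp_rate) auto
  also have "\<dots> = - ereal (max_growth_rate - growth_rate p0)" by simp
  also have "\<dots> \<le> - (INF p\<in>F \<inter> Theta. ereal (max_growth_rate - growth_rate p))"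
    using INF_lower[OF p0(1), of "\<lambda>p. ereal (max_growth_rate - growth_rate p)"]
    by (simp only: ereal_minus_le_minus)
  finally show ?thesis .
qed

lemma ldp_lower_bound:
  assumes "open G"
  shows "- (INF p\<in>G \<inter> Theta. ereal (max_growth_rate - growth_rate p))
    \<le> liminf (\<lambda>t. ereal (1 / real t) * ln_ereal (measure (wealth_dist w mu nu0 t) (G \<inter> Theta)))"
    (is "_ \<le> ?liminf")
  unfolding ereal_uminus_le_reorder[of "INF p\<in>G \<inter> Theta. ereal (max_growth_rate - growth_rate p)"]
proof (rule INF_greatest)
  fix q assume "q \<in> G \<inter> Theta"
  then have "ereal (growth_rate q - max_growth_rate) \<le> ?liminf"
    using assms by (intro liminf_rate_ge eventually_wealth_dist_ge_exp_rate)
  then have "- ereal (max_growth_rate - growth_rate q) \<le> ?liminf" by simp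
  then show "- ?liminf \<le> ereal (max_growth_rate - growth_rate q)"
    by (rule ereal_uminus_le_reorder[THEN iffD2])
qed

lemma wealth_dist_LDP:
  assumes W: "\<And>p. p \<in> Theta \<Longrightarrow> W p = growth_rate p"
  defines "I \<equiv> \<lambda>p. (SUP q\<in>Theta. W q) - W p"
  shows "(\<exists>p\<in>Theta. W p = (SUP q\<in>Theta. W q)) \<and> convex_on Theta I \<and> rate_function Theta I
    \<and> LDP (wealth_dist w mu nu0) Theta I"
proof -
  have "(SUP q\<in>Theta. W q) = max_growth_rate"
    unfolding max_growth_rate_def using W by (rule SUP_cong[OF refl])
  then have I: "I p = max_growth_rate - growth_rate p" if "p \<in> Theta" for p
    using W[OF that] by (simp add: I_def)
  have "convex_on Theta (\<lambda>p. max_growth_rate - growth_rate p)"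
    using convex_Theta concave_on_growth_rate by (intro convex_on_diff) (simp_all add: convex_on_const)
  moreover have "rate_function Theta (\<lambda>p. max_growth_rate - growth_rate p)"
    unfolding rate_function_def
  proof (intro conjI ballI allI)
    show "0 \<le> max_growth_rate - growth_rate p" if "p \<in> Theta" for p
      using growth_rate_le_max[OF that] by simp
    have "{p \<in> Theta. max_growth_rate - growth_rate p \<le> c} = Theta \<inter> (\<lambda>p. max_growth_rate - growth_rate p) -` {..c}"
      for c by auto
    then show "closed {p \<in> Theta. max_growth_rate - growth_rate p \<le> c}" for c
      using continuous_on_growth_rate
      by (simp add: continuous_closed_preimage closed_Theta continuous_on_diff continuous_on_const)
  qed
  moreover have "LDP (wealth_dist w mu nu0) Theta (\<lambda>p. max_growth_rate - growth_rate p)"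
    unfolding LDP_def using ldp_upper_bound ldp_lower_bound by blast
  ultimately show ?thesis
    using max_growth_rate_attained W \<open>(SUP q\<in>Theta. W q) = max_growth_rate\<close>
    by (simp add: convex_on_cong[OF I] rate_function_cong[OF I] LDP_cong[OF I])
qed


lemma growth_rate_limit_and_LDP:
  "(\<forall>p\<in>Theta. convergent (\<lambda>t. (1 / real t) * ln (relval w mu p t))) \<and>
    (let W = (\<lambda>p. lim (\<lambda>t. (1 / real t) * ln (relval w mu p t)));
         Wstar = (SUP p\<in>Theta. W p);
         I = (\<lambda>p. Wstar - W p)
     in (\<exists>p\<in>Theta. W p = Wstar) \<and> convex_on Theta I \<and> rate_function Theta I \<and>
        LDP (wealth_dist w mu nu0) Theta I)"
  unfolding Let_def
proof (rule conjI)
  show "\<forall>p\<in>Theta. convergent (\<lambda>t. (1 / real t) * ln (relval w mu p t))"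
    using tendsto_growth_rate by (auto intro: convergentI)
qed (rule wealth_dist_LDP, rule limI[OF tendsto_growth_rate])

end

theorem theorem3p3:
  fixes w :: "'e::finite \<Rightarrow> real^'n"
    and mu :: "nat \<Rightarrow> 'e"
    and nu0 :: "(real^'n^'e) measure"
  assumes n2: "CARD('n) \<ge> 2"
    and w_inj: "inj w"
    and w_simplex: "\<And>e. w e \<in> open_simplex"
    and nu0_borel: "sets nu0 = sets borel"
    and nu0_prob: "prob_space nu0"
    and nu0_supp: "full_support nu0 Theta"
  shows "((\<lambda>t. (1 / real t) * ln (Vhat w mu nu0 t / Vstar w mu t)) \<longlonglongrightarrow> 0) \<and>
    (\<forall>P. emp_weak_conv mu P \<longrightarrow>
      (\<forall>p\<in>Theta. convergent (\<lambda>t. (1 / real t) * ln (relval w mu p t))) \<and>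
      (let W = (\<lambda>p. lim (\<lambda>t. (1 / real t) * ln (relval w mu p t)));
           Wstar = (SUP p\<in>Theta. W p);
           I = (\<lambda>p. Wstar - W p)
       in (\<exists>p\<in>Theta. W p = Wstar) \<and> convex_on Theta I \<and> rate_function Theta I \<and>
          LDP (wealth_dist w mu nu0) Theta I))"
proof -
  interpret market w mu nu0
    using w_simplex nu0_borel nu0_prob nu0_supp by (simp add: market_def)
  have "market_limit w mu nu0 P" if "emp_weak_conv mu P" for P
    using that by unfold_locales
  with universality market_limit.growth_rate_limit_and_LDP show ?thesis by blast
qed

end
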